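(* Let $(q,\boldsymbol{\alpha}^{(p)},\boldsymbol{\alpha}^{(s)},\boldsymbol{\beta}^{(p)},\boldsymbol{\beta}^{(s)})$ be a cyclic-addition degree table (CAT) for parameters $K,L,T$ with $N$ unique entries. Let $p$ be a prime with $q\mid p-1$ and let $\boldsymbol\rho=(\rho_1,\dots,\rho_N)$ be $q$-th roots of unity in $\mathbb{F}_p$ satisfying conditions (IV)(a) and (IV)(b) of the CAT definition. Then the polynomial-code PDMM scheme with $N$ workers defined in the context by these degrees and evaluation points is $T$-private and decodable.
   Context: Definition (CAT). For a positive integer $q$ and vectors $\boldsymbol{\alpha}^{(p)}\in\mathbb{Z}_q^K,\boldsymbol{\alpha}^{(s)}\in\mathbb{Z}_q^T,\boldsymbol{\beta}^{(p)}\in\mathbb{Z}_q^L,\boldsymbol{\beta}^{(s)}\in\mathbb{Z}_q^T$ ($\mathbb{Z}_q$ the integers mod $q$), write $\{\mathbf v\}$ for the set of entries of a vector $\mathbf v$ and let (additions in $\mathbb{Z}_q$, sumsets $\mathcal A+\mathcal B=\{a+b\}$) $\mathcal{TL}=\{\boldsymbol{\alpha}^{(p)}\}+\{\boldsymbol{\beta}^{(p)}\}$, $\mathcal{TR}=\{\boldsymbol{\alpha}^{(p)}\}+\{\boldsymbol{\beta}^{(s)}\}$, $\mathcal{BL}=\{\boldsymbol{\alpha}^{(s)}\}+\{\boldsymbol{\beta}^{(p)}\}$, $\mathcal{BR}=\{\boldsymbol{\alpha}^{(s)}\}+\{\boldsymbol{\beta}^{(s)}\}$, and let $\boldsymbol\gamma$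 list the elements of $\mathcal{TL}\cup\mathcal{TR}\cup\mathcal{BL}\cup\mathcal{BR}$ in ascending order (identifying $\mathbb{Z}_q$ with $\{0,\dots,q-1\}$). For a vector $\boldsymbol\rho$ of length $n$ of $q$-th roots of unity and $\boldsymbol\delta\in\mathbb{Z}_q^m$, $\mathbf V(\boldsymbol\rho,\boldsymbol\delta)$ is the $n\times m$ matrix with entries $\rho_i^{\delta_j}$. The tuple is a CAT for $K,L,T$ with $N$ unique entries if: (I) $|\mathcal{TL}\cup\mathcal{TR}\cup\mathcal{BL}\cup\mathcal{BR}|=N$; (II) $|\mathcal{TL}|=KL$; (III) $\mathcal{TL}\cap\mathcal{TR}=\mathcal{TL}\cap\mathcal{BL}=\mathcal{TL}\cap\mathcal{BR}=\emptyset$; (IV) in every prime field $\mathbb{F}_p$ with $q\mid p-1$ there exist $N$ $q$-th roots of unity $\boldsymbol\rho=(\rho_1,\dots,\rho_N)$ such that (a) $\mathbf V(\boldsymbol\rho,\boldsymbol\gamma)$ is invertible and (b) all $T\times T$ submatrices of $\mathbf V(\boldsymbol\rho,\boldsymbol{\alpha}^{(s)})$ and of $\mathbf V(\boldsymbol\rho,\boldsymbol{\beta}^{(s)})$ are invertible. The scheme: matrices $\mathbf A\in\mathbb{F}_p^{r_A\times c_A}$ and $\mathbf B\in\mathbb{F}_p^{c_A\times c_B}$ have an arbitrary (unknown) joint distribution, with $K\mid r_A$, $L\mid c_B$. Write $\mathbf A=(\mathbf A_1^T\cdots\mathbf A_K^T)^T$ (horizontal split into $K$ equal blocks) and $\mathbf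 B=(\mathbf B_1\cdots\mathbf B_L)$ (vertical split into $L$ equal blocks). A main node draws $\mathbf R_1,\dots,\mathbf R_T$ (of the size of $\mathbf A_i$) and $\mathbf S_1,\dots,\mathbf S_T$ (of the size of $\mathbf B_j$) independently and uniformly at random, independent of $(\mathbf A,\mathbf B)$, and forms $\mathbf F(x)=\sum_{i=1}^K\mathbf A_i x^{\alpha^{(p)}_i}+\sum_{i=1}^T\mathbf R_i x^{\alpha^{(s)}_i}$ and $\mathbf G(x)=\sum_{j=1}^L\mathbf B_j x^{\beta^{(p)}_j}+\sum_{j=1}^T\mathbf S_j x^{\beta^{(s)}_j}$ (exponents taken as representatives in $\{0,\dots,q-1\}$). Worker $n\in\{1,\dots,N\}$ receives $\widetilde{\mathbf A}_n=\mathbf F(\rho_n)$, $\widetilde{\mathbf B}_n=\mathbf G(\rho_n)$ and returns $\widetilde{\mathbf A}_n\widetilde{\mathbf B}_n$. The scheme is $T$-private if for every set $\mathcal T\subset\{1,\dots,N\}$ with $|\mathcal T|=T$ the mutual information between $(\mathbf A,\mathbf B)$ and $\{(\widetilde{\mathbf A}_n,\widetilde{\mathbf B}_n):n\in\mathcal T\}$ is zero. It is decodable if the main node can compute all products $\mathbf A_i\mathbf B_j$, $i\in\{1,\dots,K\}$, $j\in\{1,\dots,L\}$, from the $N$ returned products. *)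

theory Defs
  imports "Jordan_Normal_Form.Determinant" "Jordan_Normal_Form.DL_Submatrix"
          "HOL-Probability.Probability_Mass_Function"
begin

(* Vectors of length n are functions nat => _ read on {0..<n} (0-based indices).
   Elements of Z_q are represented by their representatives in {0..<q}. *)

definition Vmat :: "(nat \<Rightarrow> 'a::comm_ring_1) \<Rightarrow> nat \<Rightarrow> (nat \<Rightarrow> nat) \<Rightarrow> nat \<Rightarrow> 'a mat" where
  "Vmat rho n delta m = Matrix.mat n m (\<lambda>(i,j). rho i ^ delta j)"

definition sumset :: "nat \<Rightarrow> (nat \<Rightarrow> nat) \<Rightarrow> nat \<Rightarrow> (nat \<Rightarrow> nat) \<Rightarrow> nat \<Rightarrow> nat set" where
  "sumset q a k b l = {(a i + b j) mod q | i j. i < k \<and> j < l}"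

definition TLset where "TLset q K L T ap as bp bs = sumset q ap K bp L"
definition TRset where "TRset q K L T ap as bp bs = sumset q ap K bs T"
definition BLset where "BLset q K L T ap as bp bs = sumset q as T bp L"
definition BRset where "BRset q K L T ap as bp bs = sumset q as T bs T"

definition allset where
  "allset q K L T ap as bp bs =
     TLset q K L T ap as bp bs \<union> TRset q K L T ap as bp bs \<union>
     BLset q K L T ap as bp bs \<union> BRset q K L T ap as bp bs"

definition gamma :: "nat \<Rightarrow> nat \<Rightarrow> nat \<Rightarrow> nat \<Rightarrow> (nat \<Rightarrow> nat) \<Rightarrow> (nat \<Rightarrow> nat) \<Rightarrow>
    (nat \<Rightarrow> nat) \<Rightarrow> (nat \<Rightarrow> nat) \<Rightarrow> nat \<Rightarrow> nat" where
  "gamma q K L T ap as bp bs j = sorted_list_of_set (allset q K L T ap as bp bs) ! j"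

definition cond_IV_ab :: "nat \<Rightarrow> nat \<Rightarrow> nat \<Rightarrow> nat \<Rightarrow> nat \<Rightarrow> (nat \<Rightarrow> nat) \<Rightarrow> (nat \<Rightarrow> nat) \<Rightarrow>
    (nat \<Rightarrow> nat) \<Rightarrow> (nat \<Rightarrow> nat) \<Rightarrow> (nat \<Rightarrow> 'a::field) \<Rightarrow> bool" where
  "cond_IV_ab q K L T N ap as bp bs rho \<longleftrightarrow>
     (\<forall>i<N. rho i ^ q = 1) \<and>
     invertible_mat (Vmat rho N (gamma q K L T ap as bp bs) N) \<and>
     (\<forall>I \<subseteq> {0..<N}. card I = T \<longrightarrow>
        invertible_mat (submatrix (Vmat rho N as T) I {0..<T}) \<and>
        invertible_mat (submatrix (Vmat rho N bs T) I {0..<T}))"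

(* The same condition in the prime field F_p, elements represented by integers;
   a square integer matrix is invertible over F_p iff its determinant is nonzero mod p *)
definition cond_IV_ab_modp :: "int \<Rightarrow> nat \<Rightarrow> nat \<Rightarrow> nat \<Rightarrow> nat \<Rightarrow> nat \<Rightarrow> (nat \<Rightarrow> nat) \<Rightarrow> (nat \<Rightarrow> nat) \<Rightarrow>
    (nat \<Rightarrow> nat) \<Rightarrow> (nat \<Rightarrow> nat) \<Rightarrow> (nat \<Rightarrow> int) \<Rightarrow> bool" where
  "cond_IV_ab_modp p q K L T N ap as bp bs rho \<longleftrightarrow>
     (\<forall>i<N. rho i ^ q mod p = 1 mod p) \<and>
     \<not> p dvd Determinant.det (Vmat rho N (gamma q K L T ap as bp bs) N) \<and>
     (\<forall>I \<subseteq> {0..<N}. card I = T \<longrightarrow>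
        \<not> p dvd Determinant.det (submatrix (Vmat rho N as T) I {0..<T}) \<and>
        \<not> p dvd Determinant.det (submatrix (Vmat rho N bs T) I {0..<T}))"

definition is_CAT :: "nat \<Rightarrow> nat \<Rightarrow> nat \<Rightarrow> nat \<Rightarrow> nat \<Rightarrow> (nat \<Rightarrow> nat) \<Rightarrow> (nat \<Rightarrow> nat) \<Rightarrow>
    (nat \<Rightarrow> nat) \<Rightarrow> (nat \<Rightarrow> nat) \<Rightarrow> bool" where
  "is_CAT q K L T N ap as bp bs \<longleftrightarrow>
     q > 0 \<and>
     (\<forall>i<K. ap i < q) \<and> (\<forall>i<T. as i < q) \<and> (\<forall>j<L. bp j < q) \<and> (\<forall>j<T. bs j < q) \<and>
     card (allset q K L T ap as bp bs) = N \<and>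
     card (TLset q K L T ap as bp bs) = K * L \<and>
     TLset q K L T ap as bp bs \<inter> TRset q K L T ap as bp bs = {} \<and>
     TLset q K L T ap as bp bs \<inter> BLset q K L T ap as bp bs = {} \<and>
     TLset q K L T ap as bp bs \<inter> BRset q K L T ap as bp bs = {} \<and>
     (\<forall>p::nat. prime p \<and> q dvd p - 1 \<longrightarrow>
        (\<exists>rho. cond_IV_ab_modp (int p) q K L T N ap as bp bs rho))"

definition blockA :: "nat \<Rightarrow> 'a mat \<Rightarrow> nat \<Rightarrow> 'a mat" where
  "blockA K A i = Matrix.mat (dim_row A div K) (dim_col A) (\<lambda>(r,c). A $$ (i * (dim_row A div K) + r, c))"

definition blockB :: "nat \<Rightarrow> 'a mat \<Rightarrow> nat \<Rightarrow> 'a mat" where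
  "blockB L B j = Matrix.mat (dim_row B) (dim_col B div L) (\<lambda>(r,c). B $$ (r, j * (dim_col B div L) + c))"

definition encF :: "nat \<Rightarrow> nat \<Rightarrow> (nat \<Rightarrow> nat) \<Rightarrow> (nat \<Rightarrow> nat) \<Rightarrow> 'a::comm_ring_1 mat \<Rightarrow>
    'a mat list \<Rightarrow> 'a \<Rightarrow> 'a mat" where
  "encF K T ap as A Rs x = Matrix.mat (dim_row A div K) (dim_col A) (\<lambda>(r,c).
      (\<Sum>i<K. blockA K A i $$ (r,c) * x ^ ap i) + (\<Sum>i<T. (Rs ! i) $$ (r,c) * x ^ as i))"

definition encG :: "nat \<Rightarrow> nat \<Rightarrow> (nat \<Rightarrow> nat) \<Rightarrow> (nat \<Rightarrow> nat) \<Rightarrow> 'a::comm_ring_1 mat \<Rightarrow>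
    'a mat list \<Rightarrow> 'a \<Rightarrow> 'a mat" where
  "encG L T bp bs B Ss x = Matrix.mat (dim_row B) (dim_col B div L) (\<lambda>(r,c).
      (\<Sum>j<L. blockB L B j $$ (r,c) * x ^ bp j) + (\<Sum>j<T. (Ss ! j) $$ (r,c) * x ^ bs j))"

definition unif_mats :: "nat \<Rightarrow> nat \<Rightarrow> nat \<Rightarrow> 'a::{finite,zero} mat list pmf" where
  "unif_mats T r c = pmf_of_set {Ms. length Ms = T \<and> set Ms \<subseteq> carrier_mat r c}"

definition view_experiment ::
  "nat \<Rightarrow> nat \<Rightarrow> nat \<Rightarrow> (nat \<Rightarrow> nat) \<Rightarrow> (nat \<Rightarrow> nat) \<Rightarrow> (nat \<Rightarrow> nat) \<Rightarrow> (nat \<Rightarrow> nat) \<Rightarrow>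
   (nat \<Rightarrow> 'a::{finite,field}) \<Rightarrow> ('a mat \<times> 'a mat) pmf \<Rightarrow> nat set \<Rightarrow>
   (('a mat \<times> 'a mat) \<times> ('a mat \<times> 'a mat) list) pmf" where
  "view_experiment K L T ap as bp bs rho D W =
     do { AB \<leftarrow> D;
          Rs \<leftarrow> unif_mats T (dim_row (fst AB) div K) (dim_col (fst AB));
          Ss \<leftarrow> unif_mats T (dim_row (snd AB)) (dim_col (snd AB) div L);
          return_pmf (AB, map (\<lambda>n. (encF K T ap as (fst AB) Rs (rho n),
                                     encG L T bp bs (snd AB) Ss (rho n)))
                              (sorted_list_of_set W)) }"

definition mutual_info :: "('x \<times> 'y) pmf \<Rightarrow> real" where
  "mutual_info J = (\<Sum>z\<in>set_pmf J. pmf J z *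
      log 2 (pmf J z / (pmf (map_pmf fst J) (fst z) * pmf (map_pmf snd J) (snd z))))"

definition T_private where
  "T_private rA cA cB K L T N ap as bp bs (rho :: nat \<Rightarrow> 'a::{finite,field}) \<longleftrightarrow>
     (\<forall>D :: ('a mat \<times> 'a mat) pmf. set_pmf D \<subseteq> carrier_mat rA cA \<times> carrier_mat cA cB \<longrightarrow>
        (\<forall>W \<subseteq> {0..<N}. card W = T \<longrightarrow>
           mutual_info (view_experiment K L T ap as bp bs rho D W) = 0))"

definition decodable where
  "decodable rA cA cB K L T N ap as bp bs (rho :: nat \<Rightarrow> 'a::{finite,field}) \<longleftrightarrow>
     (\<exists>dec :: 'a mat list \<Rightarrow> nat \<Rightarrow> nat \<Rightarrow> 'a mat.
        \<forall>A B Rs Ss. A \<in> carrier_mat rA cA \<longrightarrow> B \<in> carrier_mat cA cB \<longrightarrow>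
          length Rs = T \<longrightarrow> set Rs \<subseteq> carrier_mat (rA div K) cA \<longrightarrow>
          length Ss = T \<longrightarrow> set Ss \<subseteq> carrier_mat cA (cB div L) \<longrightarrow>
          (\<forall>i<K. \<forall>j<L.
             dec (map (\<lambda>n. encF K T ap as A Rs (rho n) * encG L T bp bs B Ss (rho n)) [0..<N]) i j
               = blockA K A i * blockB L B j))"

end

theory Submission
  imports Defs
begin

(*
  Decoding: since V(rho, gamma) is invertible, each exponent gamma_k has dual weights w with
  sum_n w_n rho_n^(gamma_m) = [k = m], and as rho_n^q = 1 the same holds for every exponent e with
  e mod q = gamma_m. The worker products F(rho_n) G(rho_n) are combinations of monomials whose
  exponents mod q lie in TL, TR, BL or BR; by (II) and (III) the exponent alpha_i + beta_j occurs
  only with the coefficient A_i B_j, so the weights dual to it recover A_i B_j.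

  Privacy: for a set W of T workers, the shares (F(rho_n))_(n in W) are a fixed matrix depending
  on A plus the image of (R_1, ..., R_T) under the invertible matrix of (IV)(b). This affine map
  permutes the uniformly distributed T-tuples, so the shares of A, and likewise those of B, are
  uniform whatever (A, B) is. The view is therefore a product distribution, whose mutual
  information vanishes.
*)

section \<open>Invertible Vandermonde matrices\<close>

lemma invertible_mat_left_inverse:
  assumes "invertible_mat M" and "M \<in> carrier_mat n n"
  obtains B where "B \<in> carrier_mat n n" and "B * M = 1\<^sub>m n"
proof -
  from assms obtain B where "B * M = 1\<^sub>m (dim_row B)" "M * B = 1\<^sub>m n"
    unfolding invertible_mat_def inverts_mat_def by auto
  moreover from this have "B \<in> carrier_mat n n"
    using assms(2) by (metis carrier_matD(2) carrier_matI index_mult_mat(3) index_one_mat(3))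
  ultimately show thesis using that by (metis carrier_matD(1))
qed

lemma invertible_mat_mult_vec_eq_0:
  fixes M :: "'a::comm_ring_1 mat"
  assumes "invertible_mat M" and M: "M \<in> carrier_mat n n"
    and v: "v \<in> carrier_vec n" and "M *\<^sub>v v = 0\<^sub>v n"
  shows "v = 0\<^sub>v n"
proof -
  obtain B where B: "B \<in> carrier_mat n n" "B * M = 1\<^sub>m n"
    using invertible_mat_left_inverse assms(1,2) .
  have "v = (B * M) *\<^sub>v v" using B v by simp
  also have "\<dots> = B *\<^sub>v (M *\<^sub>v v)" by (rule assoc_mult_mat_vec[OF B(1) M v])
  also have "\<dots> = B *\<^sub>v 0\<^sub>v n" using \<open>M *\<^sub>v v = 0\<^sub>v n\<close> by simp
  also have "\<dots> = 0\<^sub>v n" using B(1) by (intro eq_vecI) auto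
  finally show ?thesis .
qed

lemma Vmat_dual_weights:
  fixes rho :: "nat \<Rightarrow> 'a::comm_ring_1"
  assumes "invertible_mat (Vmat rho N delta N)"
  obtains w where "\<And>k m. k < N \<Longrightarrow> m < N \<Longrightarrow>
    (\<Sum>n<N. w k n * rho n ^ delta m) = (if k = m then 1 else 0)"
proof -
  have V: "Vmat rho N delta N \<in> carrier_mat N N" by (simp add: Vmat_def)
  obtain B where B: "B \<in> carrier_mat N N" "B * Vmat rho N delta N = 1\<^sub>m N"
    using invertible_mat_left_inverse assms V .
  show thesis
  proof (rule that[of "\<lambda>k n. B $$ (k, n)"])
    fix k m assume "k < N" "m < N"
    then have "(B * Vmat rho N delta N) $$ (k, m) = (\<Sum>n<N. B $$ (k, n) * rho n ^ delta m)"
      using B(1) by (simp add: Vmat_def scalar_prod_def atLeast0LessThan)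
    then show "(\<Sum>n<N. B $$ (k, n) * rho n ^ delta m) = (if k = m then 1 else 0)"
      using B(2) \<open>k < N\<close> \<open>m < N\<close> by simp
  qed
qed

lemma submatrix_Vmat:
  assumes "W \<subseteq> {0..<N}" "card W = T"
  shows "submatrix (Vmat rho N e T) W {0..<T} \<in> carrier_mat T T"
    and "\<And>m t. m < T \<Longrightarrow> t < T \<Longrightarrow> submatrix (Vmat rho N e T) W {0..<T} $$ (m, t) = rho (pick W m) ^ e t"
proof -
  let ?V = "Vmat rho N e T"
  have "{i. i < dim_row ?V \<and> i \<in> W} = W" "{j. j < dim_col ?V \<and> j \<in> {0..<T}} = {0..<T}"
    using assms(1) by (auto simp: Vmat_def)
  then have rows: "card {i. i < dim_row ?V \<and> i \<in> W} = T"
    and cols: "card {j. j < dim_col ?V \<and> j \<in> {0..<T}} = T"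
    using assms(2) by simp_all
  show "submatrix ?V W {0..<T} \<in> carrier_mat T T"
    by (intro carrier_matI) (simp_all only: dim_submatrix rows cols)
  fix m t assume "m < T" "t < T"
  have "submatrix ?V W {0..<T} $$ (m, t) = ?V $$ (pick W m, pick {0..<T} t)"
    by (rule submatrix_index) (simp_all only: rows cols \<open>m < T\<close> \<open>t < T\<close>)
  moreover have "pick W m \<in> W"
    using pick_in_set_le[of m W] \<open>m < T\<close> assms(2) by simp
  moreover have "{a \<in> {0..<T}. a < t} = {0..<t}"
    using \<open>t < T\<close> by auto
  then have "pick {0..<T} t = t"
    using pick_card_in_set[of t "{0..<T}"] \<open>t < T\<close> by simp
  ultimately show "submatrix ?V W {0..<T} $$ (m, t) = rho (pick W m) ^ e t"
    using assms(1) \<open>t < T\<close> by (auto simp: Vmat_def)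
qed

lemma Vmat_rows_injective:
  fixes rho :: "nat \<Rightarrow> 'a::comm_ring_1"
  assumes W: "W \<subseteq> {0..<N}" "card W = T"
    and inv: "invertible_mat (submatrix (Vmat rho N e T) W {0..<T})"
    and eq: "\<And>n. n \<in> W \<Longrightarrow> (\<Sum>t<T. y t * rho n ^ e t) = (\<Sum>t<T. z t * rho n ^ e t)"
    and "t < T"
  shows "y t = z t"
proof -
  let ?M = "submatrix (Vmat rho N e T) W {0..<T}"
  define d where "d = Matrix.vec T (\<lambda>t. y t - z t)"
  have M: "?M \<in> carrier_mat T T"
    by (rule submatrix_Vmat(1)[OF W])
  have "?M *\<^sub>v d = 0\<^sub>v T"
  proof (rule eq_vecI)
    fix m assume "m < dim_vec (0\<^sub>v T)"
    then have "m < T" by simp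
    have "pick W m \<in> W"
      using pick_in_set_le[of m W] \<open>m < T\<close> W(2) by simp
    have "(?M *\<^sub>v d) $ m = (\<Sum>t\<in>{0..<T}. ?M $$ (m, t) * (y t - z t))"
      using M \<open>m < T\<close> by (simp add: d_def scalar_prod_def)
    also have "\<dots> = (\<Sum>t<T. rho (pick W m) ^ e t * (y t - z t))"
      by (rule sum.cong) (auto simp: submatrix_Vmat(2)[OF W \<open>m < T\<close>])
    also have "\<dots> = 0"
      using eq[OF \<open>pick W m \<in> W\<close>] by (simp add: mult.commute left_diff_distrib sum_subtractf)
    finally show "(?M *\<^sub>v d) $ m = 0\<^sub>v T $ m"
      using \<open>m < T\<close> by simp
  qed (use M in simp)
  then have "d = 0\<^sub>v T"
    using invertible_mat_mult_vec_eq_0[OF inv M] by (simp add: d_def)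
  then have "d $ t = 0"
    using \<open>t < T\<close> by simp
  then show ?thesis
    using \<open>t < T\<close> by (simp add: d_def)
qed

section \<open>Decodability\<close>

lemma power_eq_power_mod:
  fixes x :: "'a::monoid_mult"
  assumes "x ^ q = 1"
  shows "x ^ e = x ^ (e mod q)"
proof -
  have "x ^ e = x ^ (q * (e div q) + e mod q)"
    by simp
  also have "\<dots> = (x ^ q) ^ (e div q) * x ^ (e mod q)"
    by (simp only: power_add power_mult)
  finally show ?thesis
    using assms by simp
qed

lemma sumset_eq_image: "sumset q a k b l = (\<lambda>(i, j). (a i + b j) mod q) ` ({..<k} \<times> {..<l})"
  unfolding sumset_def by auto

lemma finite_allset: "finite (allset q K L T ap as bp bs)"
  by (simp add: allset_def TLset_def TRset_def BLset_def BRset_def sumset_eq_image)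

lemma bij_betw_gamma:
  assumes "card (allset q K L T ap as bp bs) = N"
  shows "bij_betw (gamma q K L T ap as bp bs) {..<N} (allset q K L T ap as bp bs)"
  unfolding gamma_def using assms finite_allset
  by (intro bij_betw_nth) (simp_all add: lessThan_atLeast0)

lemma inj_on_sumset_card:
  assumes "card (sumset q a k b l) = k * l"
  shows "inj_on (\<lambda>(i, j). (a i + b j) mod q) ({..<k} \<times> {..<l})"
  using assms unfolding sumset_eq_image
  by (intro eq_card_imp_inj_on) (simp_all add: card_cartesian_product)

lemma CAT_dual_weights:
  fixes rho :: "nat \<Rightarrow> 'a::field"
  assumes cat: "is_CAT q K L T N ap as bp bs"
    and rho_IV: "cond_IV_ab q K L T N ap as bp bs rho"
  obtains w where "\<And>s e. s \<in> allset q K L T ap as bp bs \<Longrightarrow> e mod q \<in> allset q K L T ap as bp bs \<Longrightarrow>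
    (\<Sum>n<N. w s n * rho n ^ e) = (if e mod q = s then 1 else 0)"
proof -
  let ?S = "allset q K L T ap as bp bs"
  let ?g = "gamma q K L T ap as bp bs"
  have bij: "bij_betw ?g {..<N} ?S"
    using cat unfolding is_CAT_def by (intro bij_betw_gamma) simp
  obtain c where c: "\<And>k m. k < N \<Longrightarrow> m < N \<Longrightarrow> (\<Sum>n<N. c k n * rho n ^ ?g m) = (if k = m then 1 else 0)"
    using Vmat_dual_weights rho_IV unfolding cond_IV_ab_def by blast
  have periodic: "rho n ^ e = rho n ^ (e mod q)" if "n < N" for n e
    using rho_IV that unfolding cond_IV_ab_def by (intro power_eq_power_mod) simp
  show thesis
  proof (rule that[of "\<lambda>s. c (the_inv_into {..<N} ?g s)"])
    fix s e assume "s \<in> ?S" "e mod q \<in> ?S"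
    define k where "k = the_inv_into {..<N} ?g s"
    have k: "k < N" "?g k = s"
      using bij_betw_apply[OF bij_betw_the_inv_into[OF bij] \<open>s \<in> ?S\<close>]
        f_the_inv_into_f_bij_betw[OF bij \<open>s \<in> ?S\<close>]
      unfolding k_def by simp_all
    have "e mod q \<in> ?g ` {..<N}"
      using bij \<open>e mod q \<in> ?S\<close> by (simp add: bij_betw_def)
    then obtain m where m: "m < N" "?g m = e mod q"
      by auto
    have "(\<Sum>n<N. c k n * rho n ^ e) = (\<Sum>n<N. c k n * rho n ^ ?g m)"
      using periodic[of _ e] m(2) by simp
    also have "\<dots> = (if k = m then 1 else 0)"
      using c k(1) m(1) by blast
    also have "(k = m) = (e mod q = s)"
      using bij k m unfolding bij_betw_def inj_on_def by auto
    finally show "(\<Sum>n<N. c k n * rho n ^ e) = (if e mod q = s then 1 else 0)" .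
  qed
qed

lemma CAT_decoding_weights:
  fixes rho :: "nat \<Rightarrow> 'a::field"
  assumes cat: "is_CAT q K L T N ap as bp bs"
    and rho_IV: "cond_IV_ab q K L T N ap as bp bs rho"
  obtains w where
    "\<And>i j i' j'. i < K \<Longrightarrow> j < L \<Longrightarrow> i' < K \<Longrightarrow> j' < L \<Longrightarrow>
       (\<Sum>n<N. w i j n * rho n ^ (ap i' + bp j')) = (if i' = i \<and> j' = j then 1 else 0)"
    "\<And>i j i' s. i < K \<Longrightarrow> j < L \<Longrightarrow> i' < K \<Longrightarrow> s < T \<Longrightarrow>
       (\<Sum>n<N. w i j n * rho n ^ (ap i' + bs s)) = 0"
    "\<And>i j t j'. i < K \<Longrightarrow> j < L \<Longrightarrow> t < T \<Longrightarrow> j' < L \<Longrightarrow>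
       (\<Sum>n<N. w i j n * rho n ^ (as t + bp j')) = 0"
    "\<And>i j t s. i < K \<Longrightarrow> j < L \<Longrightarrow> t < T \<Longrightarrow> s < T \<Longrightarrow>
       (\<Sum>n<N. w i j n * rho n ^ (as t + bs s)) = 0"
proof -
  let ?S = "allset q K L T ap as bp bs"
  let ?TL = "TLset q K L T ap as bp bs"
  let ?rest = "TRset q K L T ap as bp bs \<union> BLset q K L T ap as bp bs \<union> BRset q K L T ap as bp bs"
  obtain c where c: "\<And>s e. s \<in> ?S \<Longrightarrow> e mod q \<in> ?S \<Longrightarrow>
      (\<Sum>n<N. c s n * rho n ^ e) = (if e mod q = s then 1 else 0)"
    using CAT_dual_weights[OF cat rho_IV] by blast
  have TL: "(ap i + bp j) mod q \<in> ?TL" if "i < K" "j < L" for i j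
    using that unfolding TLset_def sumset_def by blast
  have S: "?S = ?TL \<union> ?rest" and disjoint: "?TL \<inter> ?rest = {}"
    using cat unfolding is_CAT_def allset_def by auto
  have off_TL: "(\<Sum>n<N. c ((ap i + bp j) mod q) n * rho n ^ e) = 0"
    if "i < K" "j < L" "e mod q \<in> ?rest" for i j e
  proof -
    have "(ap i + bp j) mod q \<in> ?S" "e mod q \<in> ?S"
      using TL[OF that(1,2)] that(3) S by blast+
    moreover have "e mod q \<noteq> (ap i + bp j) mod q"
    proof
      assume "e mod q = (ap i + bp j) mod q"
      with that(3) TL[OF that(1,2)] have "(ap i + bp j) mod q \<in> ?TL \<inter> ?rest"
        by simp
      with disjoint show False
        by simp
    qed
    ultimately show ?thesis
      using c by simp
  qed
  show thesis
  proof (rule that[of "\<lambda>i j. c ((ap i + bp j) mod q)"])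
    fix i j i' j' assume ij: "i < K" "j < L" and ij': "i' < K" "j' < L"
    have inj: "inj_on (\<lambda>(i, j). (ap i + bp j) mod q) ({..<K} \<times> {..<L})"
      using cat unfolding is_CAT_def TLset_def by (intro inj_on_sumset_card) simp
    have "(\<Sum>n<N. c ((ap i + bp j) mod q) n * rho n ^ (ap i' + bp j'))
        = (if (ap i' + bp j') mod q = (ap i + bp j) mod q then 1 else 0)"
      using c TL[OF ij] TL[OF ij'] S by simp
    also have "((ap i' + bp j') mod q = (ap i + bp j) mod q) = (i' = i \<and> j' = j)"
      using inj_on_eq_iff[OF inj, of "(i', j')" "(i, j)"] ij ij' by simp
    finally show "(\<Sum>n<N. c ((ap i + bp j) mod q) n * rho n ^ (ap i' + bp j'))
        = (if i' = i \<and> j' = j then 1 else 0)" .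
  qed (intro off_TL; auto simp: TRset_def BLset_def BRset_def sumset_def)+
qed

lemma power_sums_mult:
  fixes x :: "'a::comm_ring_1"
  shows "((\<Sum>i\<in>I. a i * x ^ e i) + (\<Sum>t\<in>J. r t * x ^ f t)) *
         ((\<Sum>j\<in>I'. b j * x ^ g j) + (\<Sum>s\<in>J'. u s * x ^ h s))
       = (\<Sum>i\<in>I. \<Sum>j\<in>I'. a i * b j * x ^ (e i + g j)) + (\<Sum>i\<in>I. \<Sum>s\<in>J'. a i * u s * x ^ (e i + h s))
       + (\<Sum>t\<in>J. \<Sum>j\<in>I'. r t * b j * x ^ (f t + g j)) + (\<Sum>t\<in>J. \<Sum>s\<in>J'. r t * u s * x ^ (f t + h s))"
  unfolding distrib_left distrib_right sum_product by (simp add: power_add mult_ac add_ac)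

lemma weighted_sum_double_sum:
  fixes v :: "nat \<Rightarrow> 'a::comm_ring_1"
  shows "(\<Sum>n\<in>N. v n * (\<Sum>i\<in>I. \<Sum>j\<in>J. c i j * x n ^ e i j))
       = (\<Sum>i\<in>I. \<Sum>j\<in>J. c i j * (\<Sum>n\<in>N. v n * x n ^ e i j))"
proof -
  have "(\<Sum>n\<in>N. v n * (\<Sum>i\<in>I. \<Sum>j\<in>J. c i j * x n ^ e i j))
      = (\<Sum>n\<in>N. \<Sum>i\<in>I. \<Sum>j\<in>J. c i j * (v n * x n ^ e i j))"
    by (simp add: sum_distrib_left mult_ac)
  also have "\<dots> = (\<Sum>i\<in>I. \<Sum>j\<in>J. \<Sum>n\<in>N. c i j * (v n * x n ^ e i j))"
    by (subst sum.swap) (rule sum.cong[OF refl], rule sum.swap)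
  also have "\<dots> = (\<Sum>i\<in>I. \<Sum>j\<in>J. c i j * (\<Sum>n\<in>N. v n * x n ^ e i j))"
    by (simp add: sum_distrib_left)
  finally show ?thesis .
qed

lemma weighted_sum_product_eq_coeff_product:
  fixes v x :: "nat \<Rightarrow> 'a::comm_ring_1" and N K L T i j :: nat
  defines "\<Lambda> e \<equiv> \<Sum>n<N. v n * x n ^ e"
  assumes TL: "\<And>i' j'. i' < K \<Longrightarrow> j' < L \<Longrightarrow> \<Lambda> (ap i' + bp j') = (if i' = i \<and> j' = j then 1 else 0)"
    and TR: "\<And>i' s. i' < K \<Longrightarrow> s < T \<Longrightarrow> \<Lambda> (ap i' + bs s) = 0"
    and BL: "\<And>t j'. t < T \<Longrightarrow> j' < L \<Longrightarrow> \<Lambda> (as t + bp j') = 0"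
    and BR: "\<And>t s. t < T \<Longrightarrow> s < T \<Longrightarrow> \<Lambda> (as t + bs s) = 0"
    and "i < K" "j < L"
  shows "(\<Sum>n<N. v n * (((\<Sum>i'<K. a i' * x n ^ ap i') + (\<Sum>t<T. r t * x n ^ as t)) *
                       ((\<Sum>j'<L. b j' * x n ^ bp j') + (\<Sum>s<T. u s * x n ^ bs s)))) = a i * b j"
proof -
  have "(\<Sum>n<N. v n * (((\<Sum>i'<K. a i' * x n ^ ap i') + (\<Sum>t<T. r t * x n ^ as t)) *
                       ((\<Sum>j'<L. b j' * x n ^ bp j') + (\<Sum>s<T. u s * x n ^ bs s))))
      = (\<Sum>i'<K. \<Sum>j'<L. a i' * b j' * \<Lambda> (ap i' + bp j')) + (\<Sum>i'<K. \<Sum>s<T. a i' * u s * \<Lambda> (ap i' + bs s))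
      + (\<Sum>t<T. \<Sum>j'<L. r t * b j' * \<Lambda> (as t + bp j')) + (\<Sum>t<T. \<Sum>s<T. r t * u s * \<Lambda> (as t + bs s))"
    unfolding power_sums_mult unfolding distrib_left sum.distrib weighted_sum_double_sum \<Lambda>_def ..
  also have "\<dots> = (\<Sum>i'<K. \<Sum>j'<L. a i' * b j' * (if i' = i \<and> j' = j then 1 else 0))"
    by (simp add: TL TR BL BR)
  also have "\<dots> = (\<Sum>i'<K. if i' = i then (\<Sum>j'<L. if j' = j then a i * b j else 0) else 0)"
    by (intro sum.cong refl) (auto simp: if_distrib[of "(*) _"] cong: if_cong)
  also have "\<dots> = a i * b j"
    using \<open>i < K\<close> \<open>j < L\<close> by simp
  finally show ?thesis .
qed

lemma encF_mult_encG_index: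
  assumes "A \<in> carrier_mat rA cA" "B \<in> carrier_mat cA cB" "r < rA div K" "c < cB div L"
  shows "(encF K T ap as A Rs x * encG L T bp bs B Ss x) $$ (r, c) =
    (\<Sum>l<cA. ((\<Sum>i<K. blockA K A i $$ (r, l) * x ^ ap i) + (\<Sum>t<T. (Rs ! t) $$ (r, l) * x ^ as t)) *
            ((\<Sum>j<L. blockB L B j $$ (l, c) * x ^ bp j) + (\<Sum>t<T. (Ss ! t) $$ (l, c) * x ^ bs t)))"
  using assms unfolding encF_def encG_def
  by (simp add: scalar_prod_def atLeast0LessThan)

lemma blockA_mult_blockB_index:
  assumes "A \<in> carrier_mat rA cA" "B \<in> carrier_mat cA cB" "r < rA div K" "c < cB div L"
  shows "(blockA K A i * blockB L B j) $$ (r, c) = (\<Sum>l<cA. blockA K A i $$ (r, l) * blockB L B j $$ (l, c))"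
  using assms unfolding blockA_def blockB_def
  by (simp add: scalar_prod_def atLeast0LessThan)

lemma decodable_if_CAT:
  fixes rho :: "nat \<Rightarrow> 'a::{finite,field}"
  assumes "is_CAT q K L T N ap as bp bs" and "cond_IV_ab q K L T N ap as bp bs rho"
  shows "decodable rA cA cB K L T N ap as bp bs rho"
proof -
  obtain w where TL: "\<And>i j i' j'. i < K \<Longrightarrow> j < L \<Longrightarrow> i' < K \<Longrightarrow> j' < L \<Longrightarrow>
       (\<Sum>n<N. w i j n * rho n ^ (ap i' + bp j')) = (if i' = i \<and> j' = j then 1 else 0)"
    and TR: "\<And>i j i' s. i < K \<Longrightarrow> j < L \<Longrightarrow> i' < K \<Longrightarrow> s < T \<Longrightarrow>
       (\<Sum>n<N. w i j n * rho n ^ (ap i' + bs s)) = 0"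
    and BL: "\<And>i j t j'. i < K \<Longrightarrow> j < L \<Longrightarrow> t < T \<Longrightarrow> j' < L \<Longrightarrow>
       (\<Sum>n<N. w i j n * rho n ^ (as t + bp j')) = 0"
    and BR: "\<And>i j t s. i < K \<Longrightarrow> j < L \<Longrightarrow> t < T \<Longrightarrow> s < T \<Longrightarrow>
       (\<Sum>n<N. w i j n * rho n ^ (as t + bs s)) = 0"
    by (rule CAT_decoding_weights[OF assms]) blast
  define dec where "dec Ps i j = Matrix.mat (rA div K) (cB div L)
      (\<lambda>(r, c). \<Sum>n<N. w i j n * (Ps ! n) $$ (r, c))" for Ps :: "'a mat list" and i j
  show ?thesis
    unfolding decodable_def
  proof (intro exI[of _ dec] allI impI)
    fix A B :: "'a mat" and Rs Ss :: "'a mat list" and i j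
    assume A: "A \<in> carrier_mat rA cA" and B: "B \<in> carrier_mat cA cB" and "i < K" "j < L"
    let ?P = "\<lambda>n. encF K T ap as A Rs (rho n) * encG L T bp bs B Ss (rho n)"
    show "dec (map ?P [0..<N]) i j = blockA K A i * blockB L B j"
    proof (rule eq_matI)
      fix r c assume "r < dim_row (blockA K A i * blockB L B j)" "c < dim_col (blockA K A i * blockB L B j)"
      then have r: "r < rA div K" and c: "c < cB div L"
        using A B by (auto simp: blockA_def blockB_def)
      have "dec (map ?P [0..<N]) i j $$ (r, c) = (\<Sum>n<N. w i j n * ?P n $$ (r, c))"
        using r c by (simp add: dec_def)
      also have "\<dots> = (\<Sum>l<cA. \<Sum>n<N. w i j n *
          (((\<Sum>i'<K. blockA K A i' $$ (r, l) * rho n ^ ap i') + (\<Sum>t<T. (Rs ! t) $$ (r, l) * rho n ^ as t)) *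
           ((\<Sum>j'<L. blockB L B j' $$ (l, c) * rho n ^ bp j') + (\<Sum>t<T. (Ss ! t) $$ (l, c) * rho n ^ bs t))))"
        unfolding encF_mult_encG_index[OF A B r c] sum_distrib_left by (rule sum.swap)
      also have "\<dots> = (\<Sum>l<cA. blockA K A i $$ (r, l) * blockB L B j $$ (l, c))"
        using TL TR BL BR \<open>i < K\<close> \<open>j < L\<close> by (intro sum.cong refl weighted_sum_product_eq_coeff_product) auto
      also have "\<dots> = (blockA K A i * blockB L B j) $$ (r, c)"
        using blockA_mult_blockB_index[OF A B r c] ..
      finally show "dec (map ?P [0..<N]) i j $$ (r, c) = (blockA K A i * blockB L B j) $$ (r, c)" .
    qed (use A B in \<open>simp_all add: dec_def blockA_def blockB_def\<close>)
  qed
qed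

section \<open>Privacy\<close>

lemma finite_carrier_mat: "finite (carrier_mat r c :: 'a::finite mat set)"
proof -
  let ?f = "\<lambda>M::'a mat. \<lambda>p \<in> {..<r} \<times> {..<c}. M $$ p"
  have "inj_on ?f (carrier_mat r c)"
  proof (rule inj_onI)
    fix M M' assume M: "M \<in> carrier_mat r c" "M' \<in> carrier_mat r c" and eq: "?f M = ?f M'"
    show "M = M'"
    proof (rule eq_matI)
      fix i j assume "i < dim_row M'" "j < dim_col M'"
      then show "M $$ (i, j) = M' $$ (i, j)"
        using M fun_cong[OF eq, of "(i, j)"] by auto
    qed (use M in auto)
  qed
  moreover have "?f ` carrier_mat r c \<subseteq> PiE ({..<r} \<times> {..<c}) (\<lambda>_. UNIV)"
    by (force simp: PiE_iff)
  then have "finite (?f ` carrier_mat r c)"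
    by (rule finite_subset) (simp add: finite_PiE)
  ultimately show ?thesis
    by (rule finite_imageD[rotated])
qed

definition mat_lists :: "nat \<Rightarrow> nat \<Rightarrow> nat \<Rightarrow> 'a::zero mat list set" where
  "mat_lists T r c = {Ms. length Ms = T \<and> set Ms \<subseteq> carrier_mat r c}"

lemma finite_mat_lists: "finite (mat_lists T r c :: 'a::{finite,zero} mat list set)"
  using finite_lists_length_eq[OF finite_carrier_mat, of r c T]
  unfolding mat_lists_def by (simp add: conj_commute)

lemma mat_lists_not_empty: "mat_lists T r c \<noteq> {}"
  unfolding mat_lists_def by (intro ex_in_conv[THEN iffD1] exI[of _ "replicate T (0\<^sub>m r c)"]) auto

lemma unif_mats_eq_pmf_of_set: "unif_mats T r c = pmf_of_set (mat_lists T r c)"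
  unfolding unif_mats_def mat_lists_def ..

lemma map_pmf_of_set_endo:
  assumes "finite A" "A \<noteq> {}" "f ` A \<subseteq> A" "inj_on f A"
  shows "map_pmf f (pmf_of_set A) = pmf_of_set A"
  using map_pmf_of_set_inj[OF assms(4,2,1)] endo_inj_surj[OF assms(1,3,4)] by simp

lemma map_pmf_unif_mats_affine:
  fixes rho :: "nat \<Rightarrow> 'a::{finite,field}" and h :: "'a mat list \<Rightarrow> nat \<Rightarrow> 'a mat"
  assumes W: "W \<subseteq> {0..<N}" "card W = T"
    and inv: "invertible_mat (submatrix (Vmat rho N e T) W {0..<T})"
    and h_carrier: "\<And>Rs n. h Rs n \<in> carrier_mat r c"
    and h_index: "\<And>Rs n i j. i < r \<Longrightarrow> j < c \<Longrightarrow>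
        h Rs n $$ (i, j) = C n i j + (\<Sum>t<T. (Rs ! t) $$ (i, j) * rho n ^ e t)"
  shows "map_pmf (\<lambda>Rs. map (h Rs) (sorted_list_of_set W)) (unif_mats T r c) = unif_mats T r c"
proof -
  let ?f = "\<lambda>Rs. map (h Rs) (sorted_list_of_set W)"
  have "finite W"
    using W(1) finite_subset by blast
  have "?f ` mat_lists T r c \<subseteq> mat_lists T r c"
    using h_carrier W(2) by (auto simp: mat_lists_def)
  moreover have "inj_on ?f (mat_lists T r c)"
  proof (rule inj_onI)
    fix Rs Rs' assume Rs: "Rs \<in> mat_lists T r c" "Rs' \<in> mat_lists T r c" and "?f Rs = ?f Rs'"
    then have h_eq: "h Rs n = h Rs' n" if "n \<in> W" for n
      using that \<open>finite W\<close> by (simp add: map_eq_conv)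
    have index_eq: "(Rs ! t) $$ (i, j) = (Rs' ! t) $$ (i, j)" if "t < T" "i < r" "j < c" for t i j
    proof (rule Vmat_rows_injective[OF W inv _ \<open>t < T\<close>])
      fix n assume "n \<in> W"
      show "(\<Sum>t<T. (Rs ! t) $$ (i, j) * rho n ^ e t) = (\<Sum>t<T. (Rs' ! t) $$ (i, j) * rho n ^ e t)"
        using h_index[OF \<open>i < r\<close> \<open>j < c\<close>, of Rs n] h_index[OF \<open>i < r\<close> \<open>j < c\<close>, of Rs' n] h_eq[OF \<open>n \<in> W\<close>]
        by simp
    qed
    show "Rs = Rs'"
    proof (rule nth_equalityI)
      show "length Rs = length Rs'"
        using Rs by (simp add: mat_lists_def)
      fix t assume "t < length Rs"
      then have "t < T" "Rs ! t \<in> carrier_mat r c" "Rs' ! t \<in> carrier_mat r c"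
        using Rs by (auto simp: mat_lists_def)
      then show "Rs ! t = Rs' ! t"
        using index_eq by (intro eq_matI) auto
    qed
  qed
  ultimately show ?thesis
    unfolding unif_mats_eq_pmf_of_set
    by (intro map_pmf_of_set_endo finite_mat_lists mat_lists_not_empty)
qed

lemma shares_pmf_eq_uniform:
  fixes rho :: "nat \<Rightarrow> 'a::{finite,field}"
  assumes A: "A \<in> carrier_mat rA cA" and B: "B \<in> carrier_mat cA cB"
    and W: "W \<subseteq> {0..<N}" "card W = T"
    and invA: "invertible_mat (submatrix (Vmat rho N as T) W {0..<T})"
    and invB: "invertible_mat (submatrix (Vmat rho N bs T) W {0..<T})"
  shows "do { Rs \<leftarrow> unif_mats T (rA div K) cA; Ss \<leftarrow> unif_mats T cA (cB div L);
              return_pmf (map (\<lambda>n. (encF K T ap as A Rs (rho n), encG L T bp bs B Ss (rho n)))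
                              (sorted_list_of_set W)) }
       = do { X \<leftarrow> unif_mats T (rA div K) cA; Y \<leftarrow> unif_mats T cA (cB div L); return_pmf (zip X Y) }"
proof -
  let ?UR = "unif_mats T (rA div K) cA :: 'a mat list pmf"
  let ?US = "unif_mats T cA (cB div L) :: 'a mat list pmf"
  define F where "F Rs = map (\<lambda>n. encF K T ap as A Rs (rho n)) (sorted_list_of_set W)" for Rs
  define G where "G Ss = map (\<lambda>n. encG L T bp bs B Ss (rho n)) (sorted_list_of_set W)" for Ss
  have F: "map_pmf F ?UR = ?UR"
    unfolding F_def
    by (rule map_pmf_unif_mats_affine[OF W invA,
          where C = "\<lambda>n i j. \<Sum>i'<K. blockA K A i' $$ (i, j) * rho n ^ ap i'"])
      (use A in \<open>simp_all add: encF_def\<close>)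
  have G: "map_pmf G ?US = ?US"
    unfolding G_def
    by (rule map_pmf_unif_mats_affine[OF W invB,
          where C = "\<lambda>n i j. \<Sum>j'<L. blockB L B j' $$ (i, j) * rho n ^ bp j'"])
      (use B in \<open>simp_all add: encG_def\<close>)
  have "map (\<lambda>n. (encF K T ap as A Rs (rho n), encG L T bp bs B Ss (rho n))) (sorted_list_of_set W)
      = zip (F Rs) (G Ss)" for Rs Ss
    by (simp add: F_def G_def zip_map_map zip_same_conv_map)
  then have "do { Rs \<leftarrow> ?UR; Ss \<leftarrow> ?US;
              return_pmf (map (\<lambda>n. (encF K T ap as A Rs (rho n), encG L T bp bs B Ss (rho n)))
                              (sorted_list_of_set W)) }
      = do { X \<leftarrow> map_pmf F ?UR; Y \<leftarrow> map_pmf G ?US; return_pmf (zip X Y) }"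
    by (simp add: bind_map_pmf)
  then show ?thesis
    unfolding F G .
qed

lemma mutual_info_pair_pmf: "mutual_info (pair_pmf D Q) = 0"
  unfolding mutual_info_def map_fst_pair_pmf map_snd_pair_pmf
proof (rule sum.neutral, rule ballI)
  fix z assume z: "z \<in> set_pmf (pair_pmf D Q)"
  then have "pmf (pair_pmf D Q) z \<noteq> 0"
    by (metis set_pmf_iff)
  moreover have "pmf (pair_pmf D Q) z = pmf D (fst z) * pmf Q (snd z)"
    by (cases z) (simp add: pmf_pair)
  ultimately show "pmf (pair_pmf D Q) z * log 2 (pmf (pair_pmf D Q) z / (pmf D (fst z) * pmf Q (snd z))) = 0"
    by simp
qed

lemma view_experiment_eq_pair_pmf:
  fixes rho :: "nat \<Rightarrow> 'a::{finite,field}" and D :: "('a mat \<times> 'a mat) pmf"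
  assumes D: "set_pmf D \<subseteq> carrier_mat rA cA \<times> carrier_mat cA cB"
    and W: "W \<subseteq> {0..<N}" "card W = T"
    and invA: "invertible_mat (submatrix (Vmat rho N as T) W {0..<T})"
    and invB: "invertible_mat (submatrix (Vmat rho N bs T) W {0..<T})"
  shows "view_experiment K L T ap as bp bs rho D W =
    pair_pmf D (do { X \<leftarrow> unif_mats T (rA div K) cA; Y \<leftarrow> unif_mats T cA (cB div L); return_pmf (zip X Y) })"
  unfolding view_experiment_def pair_pmf_def
proof (rule bind_pmf_cong[OF refl], goal_cases)
  case (1 AB)
  then obtain A B where AB: "AB = (A, B)" and A: "A \<in> carrier_mat rA cA" and B: "B \<in> carrier_mat cA cB"
    using D by (cases AB) auto
  show ?case
    using shares_pmf_eq_uniform[OF A B W invA invB, of K L ap bp, THEN arg_cong, of "map_pmf (Pair AB)"] A B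
    unfolding AB by (simp add: map_bind_pmf map_pmf_def[of "Pair _"] bind_assoc_pmf bind_return_pmf)
qed

lemma T_private_if_submatrices_invertible:
  fixes rho :: "nat \<Rightarrow> 'a::{finite,field}"
  assumes "\<And>W. W \<subseteq> {0..<N} \<Longrightarrow> card W = T \<Longrightarrow>
    invertible_mat (submatrix (Vmat rho N as T) W {0..<T}) \<and>
    invertible_mat (submatrix (Vmat rho N bs T) W {0..<T})"
  shows "T_private rA cA cB K L T N ap as bp bs rho"
  unfolding T_private_def
  using assms by (simp add: view_experiment_eq_pair_pmf mutual_info_pair_pmf)

theorem theorem1:
  fixes rho :: "nat \<Rightarrow> 'a::{finite,field}"
    and q K L T N rA cA cB :: nat
    and ap as bp bs :: "nat \<Rightarrow> nat"
  assumes cat: "is_CAT q K L T N ap as bp bs"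
    and prime_field: "prime (CARD('a))"
    and q_dvd: "q dvd CARD('a) - 1"
    and K_pos: "K > 0" and L_pos: "L > 0"
    and K_dvd: "K dvd rA" and L_dvd: "L dvd cB"
    and rho_IV: "cond_IV_ab q K L T N ap as bp bs rho"
  shows "T_private rA cA cB K L T N ap as bp bs rho \<and> decodable rA cA cB K L T N ap as bp bs rho"
proof
  show "T_private rA cA cB K L T N ap as bp bs rho"
    using rho_IV unfolding cond_IV_ab_def by (intro T_private_if_submatrices_invertible) blast
  show "decodable rA cA cB K L T N ap as bp bs rho"
    using cat rho_IV by (rule decodable_if_CAT)
qed

end
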